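(* Let $\mathcal{A}=\{0,\dots,n\}$ and let $U$ be a real symmetric $(n+1)\times(n+1)$ payoff matrix of a symmetric game, with $u(x,y)=x^\top Uy$ and $v_\alpha(x)=u(\alpha,x)=(Ux)_\alpha$. Let $\eta>0$ and assume every solution of the inertial dynamics (ID) with interior initial position exists for all $t\ge0$. If $x^*\in\mathcal{X}=\Delta(\mathcal{A})$ is an evolutionarily stable state, then $x^*$ attracts all interior trajectories of (ID) that start near $x^*$ and with sufficiently low speed $\|\dot x(0)\|$, i.e. every such trajectory satisfies $\lim_{t\to\infty}x(t)=x^*$.
   Context: $\mathcal{X}=\{x\in\mathbb{R}^{n+1}:x_\alpha\ge0,\sum_\alpha x_\alpha=1\}$ with relative interior $\mathcal{X}^\circ$. $x^*\in\mathcal{X}$ is evolutionarily stable if there is a neighborhood $W$ of $x^*$ in $\mathcal{X}$ such that for all $x\in W$: $u(x^*,x^* )\ge u(x,x^* )$, and $u(x^*,x^* )=u(x,x^* )$ with $x\neq x^*$ implies $u(x^*,x)>u(x,x)$. A kernel is a $C^\infty$ function $\theta:[0,\infty)\to\mathbb{R}\cup\{+\infty\}$ with $\theta(x)<\infty$ for $x>0$, $\lim_{x\to0^+}\theta'(x)=-\infty$, $\theta''>0$, $\theta'''<0$ on $(0,\infty)$; fix one. With $\theta''_\alpha=\theta''(x_\alpha)$, $\theta'''_\alpha=\theta'''(x_\alpha)$, $\Theta''=(\sum_\beta1/\theta''_\beta)^{-1}$, the inertial dynamics (ID) on $\mathcal{X}^\circ$ are $$\ddot x_\alpha=\frac{1}{\theta''_\alpha}\Big[v_\alpha(x)-\sum_{\beta}\frac{\Theta''}{\theta''_\beta}v_\beta(x)\Big]-\frac{1}{2\theta''_\alpha}\Big[\theta'''_\alpha\dot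 x_\alpha^2-\sum_\beta\frac{\Theta''}{\theta''_\beta}\theta'''_\beta\dot x_\beta^2\Big]-\eta\dot x_\alpha,$$ and the speed is $\|\dot x\|=(\sum_\alpha\theta''(x_\alpha)\dot x_\alpha^2)^{1/2}$. *)

theory Defs
  imports "HOL-Analysis.Analysis"
begin

text \<open>Strategies are indexed by a finite type 'n (playing the role of A = {0..n}).\<close>

definition strat_simplex :: "(real ^ 'n::finite) set" where
  "strat_simplex = {x. (\<forall>a. 0 \<le> x $ a) \<and> (\<Sum>a\<in>UNIV. x $ a) = 1}"

definition strat_simplex_int :: "(real ^ 'n::finite) set" where
  "strat_simplex_int = rel_interior strat_simplex"

definition payoff :: "real ^ 'n ^ 'n \<Rightarrow> real ^ 'n \<Rightarrow> real ^ 'n \<Rightarrow> real" where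
  "payoff U x y = x \<bullet> (U *v y)"

definition vfield :: "real ^ 'n ^ 'n \<Rightarrow> real ^ 'n \<Rightarrow> 'n \<Rightarrow> real" where
  "vfield U x a = (U *v x) $ a"

definition ESS :: "real ^ 'n::finite ^ 'n \<Rightarrow> real ^ 'n \<Rightarrow> bool" where
  "ESS U xs \<longleftrightarrow> xs \<in> strat_simplex \<and>
     (\<exists>W. openin (top_of_set strat_simplex) W \<and> xs \<in> W \<and>
        (\<forall>x\<in>W. payoff U x xs \<le> payoff U xs xs \<and>
           (payoff U xs xs = payoff U x xs \<and> x \<noteq> xs \<longrightarrow> payoff U x x < payoff U xs x)))"

text \<open>Kernel, restricted to (0,\<infinity>) (the value at 0 does not enter the dynamics).\<close>
definition kernel :: "(real \<Rightarrow> real) \<Rightarrow> bool" where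
  "kernel \<theta> \<longleftrightarrow>
     (\<forall>k. \<forall>x>0. ((deriv ^^ k) \<theta>) differentiable (at x)) \<and>
     filterlim (deriv \<theta>) at_bot (at_right 0) \<and>
     (\<forall>x>0. (deriv ^^ 2) \<theta> x > 0 \<and> (deriv ^^ 3) \<theta> x < 0)"

definition Theta2 :: "(real \<Rightarrow> real) \<Rightarrow> real ^ 'n::finite \<Rightarrow> real" where
  "Theta2 \<theta> x = 1 / (\<Sum>b\<in>UNIV. 1 / (deriv ^^ 2) \<theta> (x $ b))"

definition ID_rhs :: "(real \<Rightarrow> real) \<Rightarrow> real ^ 'n::finite ^ 'n \<Rightarrow> real \<Rightarrow> real ^ 'n \<Rightarrow> real ^ 'n \<Rightarrow> 'n \<Rightarrow> real" where
  "ID_rhs \<theta> U \<eta> x v a =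
     (let t2 = (\<lambda>b. (deriv ^^ 2) \<theta> (x $ b)); t3 = (\<lambda>b. (deriv ^^ 3) \<theta> (x $ b));
          T = Theta2 \<theta> x in
      (1 / t2 a) * (vfield U x a - (\<Sum>b\<in>UNIV. (T / t2 b) * vfield U x b))
      - (1 / (2 * t2 a)) * (t3 a * (v $ a)\<^sup>2 - (\<Sum>b\<in>UNIV. (T / t2 b) * t3 b * (v $ b)\<^sup>2))
      - \<eta> * v $ a)"

definition ID_solution :: "(real \<Rightarrow> real) \<Rightarrow> real ^ 'n::finite ^ 'n \<Rightarrow> real \<Rightarrow> (real \<Rightarrow> real ^ 'n) \<Rightarrow> (real \<Rightarrow> real ^ 'n) \<Rightarrow> bool" where
  "ID_solution \<theta> U \<eta> x v \<longleftrightarrow>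
     (\<forall>t\<ge>0. x t \<in> strat_simplex_int \<and>
        (x has_vector_derivative v t) (at t within {0..}) \<and>
        (\<exists>acc. (v has_vector_derivative acc) (at t within {0..}) \<and>
               (\<forall>a. acc $ a = ID_rhs \<theta> U \<eta> (x t) (v t) a)))"

definition speed :: "(real \<Rightarrow> real) \<Rightarrow> real ^ 'n::finite \<Rightarrow> real ^ 'n \<Rightarrow> real" where
  "speed \<theta> x v = sqrt (\<Sum>a\<in>UNIV. (deriv ^^ 2) \<theta> (x $ a) * (v $ a)\<^sup>2)"

end

theory Submission
  imports Defs
begin

text \<open>
  Because \<open>U\<close> is symmetric, the energy \<open>E = \<Sum>\<^sub>\<alpha> \<theta>''(x\<^sub>\<alpha>) x'\<^sub>\<alpha>\<^sup>2 - u(x,x)\<close> of a solution of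
  (ID) satisfies \<open>E' = -2\<eta> \<Sum>\<^sub>\<alpha> \<theta>''(x\<^sub>\<alpha>) x'\<^sub>\<alpha>\<^sup>2 \<le> 0\<close>.  An ESS \<open>x\<^sup>*\<close> of a symmetric game is a strict
  local maximiser of \<open>u(x,x)\<close>, so a trajectory that starts close to \<open>x\<^sup>*\<close> with low speed stays in a
  sublevel set of \<open>E\<close> confining it to a small ball around \<open>x\<^sup>*\<close>.  Dissipation together with bounded
  rates forces the speed to zero.  At an \<open>\<omega>\<close>-limit point \<open>l\<close> the momentum differences
  \<open>\<theta>''(x\<^sub>a) x'\<^sub>a - \<theta>''(x\<^sub>b) x'\<^sub>b\<close> stay small but would grow at rate about \<open>v\<^sub>a(l) - v\<^sub>b(l)\<close>, so \<open>l\<close>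
  is a rest point on its support.  That support contains the support of \<open>x\<^sup>*\<close>, whence
  \<open>u(x\<^sup>*,l) = u(l,l)\<close>, contradicting the superiority of the ESS over nearby states unless \<open>l = x\<^sup>*\<close>.
\<close>

lemma continuous_on_compact_pos_lower_bound:
  fixes f :: "'a::topological_space \<Rightarrow> real"
  assumes "compact K" "continuous_on K f" "\<And>y. y \<in> K \<Longrightarrow> 0 < f y"
  obtains c where "c > 0" "\<And>y. y \<in> K \<Longrightarrow> c \<le> f y"
proof (cases "K = {}")
  case False
  then obtain y0 where "y0 \<in> K" "\<forall>y\<in>K. f y0 \<le> f y"
    using continuous_attains_inf[OF assms(1) _ assms(2)] by blast
  then show ?thesis using that assms(3) by blast
qed (rule that[of 1]; simp)

lemma continuous_on_compact_uniform_margin: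
  fixes \<alpha> \<beta> :: "'a::topological_space \<Rightarrow> real"
  assumes K: "compact K" and cont: "continuous_on K \<alpha>" "continuous_on K \<beta>"
    and nonneg: "\<And>y. y \<in> K \<Longrightarrow> 0 \<le> \<alpha> y"
    and zero: "\<And>y. y \<in> K \<Longrightarrow> \<alpha> y = 0 \<Longrightarrow> \<beta> y < 0"
  obtains s0 where "s0 > 0" "\<And>y s. y \<in> K \<Longrightarrow> 0 < s \<Longrightarrow> s < s0 \<Longrightarrow> s * \<beta> y < \<alpha> y"
proof -
  have "continuous_on K (\<lambda>y. max (\<alpha> y) (- \<beta> y))" by (intro continuous_intros cont)
  moreover have "0 < max (\<alpha> y) (- \<beta> y)" if "y \<in> K" for y
    using nonneg[OF that] zero[OF that] by linarith
  ultimately obtain c where c: "c > 0" "\<And>y. y \<in> K \<Longrightarrow> c \<le> max (\<alpha> y) (- \<beta> y)"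
    using continuous_on_compact_pos_lower_bound[OF K] by blast
  obtain B where B: "B \<ge> 0" "\<And>y. y \<in> K \<Longrightarrow> norm (\<beta> y) \<le> B"
    using continuous_on_compact_bound[OF K cont(2)] by blast
  show ?thesis
  proof (rule that[of "c / (B + 1)"])
    show "c / (B + 1) > 0" using c B by simp
    fix y s assume y: "y \<in> K" and s: "0 < s" "s < c / (B + 1)"
    consider "c \<le> \<alpha> y" | "c \<le> - \<beta> y" using c(2)[OF y] by linarith
    then show "s * \<beta> y < \<alpha> y"
    proof cases
      case 1
      have "s * \<beta> y \<le> s * B" using B(2)[OF y] s by (intro mult_left_mono) auto
      also have "\<dots> < c" using s B by (simp add: field_simps)
      finally show ?thesis using 1 by linarith
    next
      case 2
      then have "s * \<beta> y < 0" using c s by (simp add: mult_pos_neg)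
      then show ?thesis using nonneg[OF y] by linarith
    qed
  qed
qed

lemma eventually_nhds_Pair_metric:
  fixes a :: "'a::metric_space" and b :: "'b::metric_space"
  assumes "eventually P (nhds (a, b))"
  obtains d1 d2 where "d1 > 0" "d2 > 0" "\<And>y z. dist y a < d1 \<Longrightarrow> dist z b < d2 \<Longrightarrow> P (y, z)"
proof -
  obtain Pa Pb where Pa: "eventually Pa (nhds a)" and Pb: "eventually Pb (nhds b)"
    and P: "\<And>y z. Pa y \<Longrightarrow> Pb z \<Longrightarrow> P (y, z)"
    using assms unfolding nhds_prod eventually_prod_filter by blast
  obtain d1 where "d1 > 0" "\<And>y. dist y a < d1 \<Longrightarrow> Pa y"
    using Pa unfolding eventually_nhds_metric by blast
  moreover obtain d2 where "d2 > 0" "\<And>z. dist z b < d2 \<Longrightarrow> Pb z"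
    using Pb unfolding eventually_nhds_metric by blast
  ultimately show ?thesis using that P by blast
qed

lemma has_real_derivative_increment_ge:
  fixes f f' :: "real \<Rightarrow> real"
  assumes "a \<le> b" "{a..b} \<subseteq> S"
    and "\<And>t. a \<le> t \<Longrightarrow> t \<le> b \<Longrightarrow> (f has_real_derivative f' t) (at t within S)"
    and "\<And>t. a \<le> t \<Longrightarrow> t \<le> b \<Longrightarrow> c \<le> f' t"
  shows "c * (b - a) \<le> f b - f a"
proof -
  have "\<exists>t\<in>{a..b}. f b - f a = f' t * (b - a)"
  proof (rule mvt_very_simple[OF assms(1)])
    fix t assume "a \<le> t" "t \<le> b"
    then show "(f has_derivative (*) (f' t)) (at t within {a..b})"
      using assms(2,3) has_field_derivative_subset unfolding has_field_derivative_def by blast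
  qed
  then obtain t where "a \<le> t" "t \<le> b" "f b - f a = f' t * (b - a)" by auto
  then show ?thesis using assms(1,4) by (simp add: mult_right_mono)
qed

lemma has_real_derivative_increment_le:
  fixes f f' :: "real \<Rightarrow> real"
  assumes "a \<le> b" "{a..b} \<subseteq> S"
    and "\<And>t. a \<le> t \<Longrightarrow> t \<le> b \<Longrightarrow> (f has_real_derivative f' t) (at t within S)"
    and "\<And>t. a \<le> t \<Longrightarrow> t \<le> b \<Longrightarrow> f' t \<le> c"
  shows "f b - f a \<le> c * (b - a)"
proof -
  have "- c * (b - a) \<le> - f b - - f a"
    by (rule has_real_derivative_increment_ge[OF assms(1,2)]) (use assms(3,4) in \<open>auto intro: DERIV_minus\<close>)
  then show ?thesis by simp
qed

context
  fixes K K' E E' :: "real \<Rightarrow> real" and L c B :: real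
  assumes K': "\<And>t. 0 \<le> t \<Longrightarrow> (K has_real_derivative K' t) (at t within {0..})"
    and K'_bound: "\<And>t. 0 \<le> t \<Longrightarrow> \<bar>K' t\<bar> \<le> L"
    and K_nonneg: "\<And>t. 0 \<le> t \<Longrightarrow> 0 \<le> K t"
    and E': "\<And>t. 0 \<le> t \<Longrightarrow> (E has_real_derivative E' t) (at t within {0..})"
    and dissipation: "\<And>t. 0 \<le> t \<Longrightarrow> E' t \<le> - c * K t" and "c > 0"
    and E_bound: "\<And>t. 0 \<le> t \<Longrightarrow> B \<le> E t"
begin

lemma dissipated_antimono:
  assumes "0 \<le> s" "s \<le> t" shows "E t \<le> E s"
proof -
  have "E' r \<le> 0" if "0 \<le> r" for r
    using dissipation[OF that] mult_nonneg_nonneg[OF less_imp_le[OF \<open>c > 0\<close>] K_nonneg[OF that]]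
    by linarith
  then have "E t - E s \<le> 0 * (t - s)"
    using assms by (intro has_real_derivative_increment_le[OF assms(2) _ E']) auto
  then show ?thesis by simp
qed

lemma dissipated_drop:
  assumes "0 \<le> t" "0 < \<sigma>" "\<sigma> \<le> K t"
  defines "h \<equiv> \<sigma> / (2 * (L + 1))"
  shows "E (t + h) - E t \<le> - c * (\<sigma> / 2) * h"
proof -
  have K'_lower: "- L \<le> K' s" if "0 \<le> s" for s
    using K'_bound[OF that] by (simp add: abs_le_iff)
  have "0 \<le> L" using K'_bound[of 0] by simp
  have "h > 0" using assms(2) \<open>0 \<le> L\<close> by (simp add: h_def)
  \<comment> \<open>the bounded rate keeps \<open>K \<ge> \<sigma>/2\<close> for a time \<open>h\<close>\<close>
  have K_large: "\<sigma> / 2 \<le> K s" if "t \<le> s" "s \<le> t + h" for s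
  proof -
    have "(- L) * (s - t) \<le> K s - K t"
      using assms(1) K'_lower by (intro has_real_derivative_increment_ge[OF that(1) _ K']) auto
    moreover have "L * (s - t) \<le> L * h" using that \<open>0 \<le> L\<close> by (intro mult_left_mono) auto
    moreover have "L * h \<le> \<sigma> / 2" using assms(2) \<open>0 \<le> L\<close> by (simp add: h_def field_simps)
    ultimately show ?thesis using assms(3) by linarith
  qed
  have "E (t + h) - E t \<le> (- c * (\<sigma> / 2)) * (t + h - t)"
  proof (rule has_real_derivative_increment_le[OF _ _ E'])
    fix s assume "t \<le> s" "s \<le> t + h"
    then show "E' s \<le> - c * (\<sigma> / 2)"
      using dissipation[of s] K_large[of s] assms(1) \<open>c > 0\<close> by (auto intro: order.trans)
  qed (use assms(1) \<open>h > 0\<close> in auto)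
  then show ?thesis by simp
qed

text \<open>A form of Barbalat's lemma.\<close>
lemma tendsto_0_if_dissipated: "(K \<longlongrightarrow> 0) at_top"
proof (rule order_tendstoI)
  fix \<sigma> :: real assume "0 < \<sigma>"
  define h where "h = \<sigma> / (2 * (L + 1))"
  have "0 \<le> L" using K'_bound[of 0] by simp
  then have "h > 0" using \<open>0 < \<sigma>\<close> by (simp add: h_def)
  define Einf where "Einf = Inf (E ` {0..})"
  have Einf: "Einf \<le> E t" if "0 \<le> t" for t
    unfolding Einf_def using that E_bound by (intro cInf_lower bdd_belowI2) auto
  obtain T where T: "0 \<le> T" "E T < Einf + c * (\<sigma> / 2) * h"
  proof -
    have "\<exists>y\<in>E ` {0..}. y < Einf + c * (\<sigma> / 2) * h"
      using \<open>0 < \<sigma>\<close> \<open>h > 0\<close> \<open>c > 0\<close> by (intro cInf_lessD) (auto simp: Einf_def)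
    then show ?thesis using that by auto
  qed
  \<comment> \<open>after \<open>T\<close>, the energy has less than one drop left to lose\<close>
  have "K t < \<sigma>" if "T \<le> t" for t
  proof (rule ccontr)
    assume "\<not> K t < \<sigma>"
    then have "E (t + h) - E t \<le> - c * (\<sigma> / 2) * h"
      using dissipated_drop[of t \<sigma>] T(1) that \<open>0 < \<sigma>\<close> by (simp add: h_def)
    moreover have "Einf \<le> E (t + h)" using Einf T(1) that \<open>h > 0\<close> by simp
    moreover have "E t \<le> E T" using dissipated_antimono T(1) that by blast
    ultimately show False using T(2) by simp
  qed
  then show "\<forall>\<^sub>F t in at_top. K t < \<sigma>" unfolding eventually_at_top_linorder by blast
next
  fix \<sigma> :: real assume "\<sigma> < 0"
  then show "\<forall>\<^sub>F t in at_top. \<sigma> < K t"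
    unfolding eventually_at_top_linorder using K_nonneg by (auto intro: less_le_trans)
qed

end

definition omega_limit_point :: "(real \<Rightarrow> 'a::metric_space) \<Rightarrow> 'a \<Rightarrow> bool" where
  "omega_limit_point x l \<longleftrightarrow> (\<forall>e>0. \<forall>T. \<exists>t\<ge>T. dist (x t) l < e)"

lemma omega_limit_point_in_compact:
  fixes x :: "real \<Rightarrow> 'a::metric_space"
  assumes "compact K" "\<And>t. 0 \<le> t \<Longrightarrow> x t \<in> K" "\<not> (x \<longlongrightarrow> c) at_top"
  obtains l where "l \<in> K" "l \<noteq> c" "omega_limit_point x l"
proof -
  obtain e where "e > 0" and far: "\<And>T. \<exists>t\<ge>T. e \<le> dist (x t) c"
    using assms(3) unfolding tendsto_iff eventually_at_top_linorder by (meson not_le)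
  define s where "s n = (SOME t. real n \<le> t \<and> e \<le> dist (x t) c)" for n :: nat
  have s: "real n \<le> s n" "e \<le> dist (x (s n)) c" for n
    using someI_ex[OF far[of "real n"]] unfolding s_def by auto
  have "\<forall>n. x (s n) \<in> K"
    using s(1) by (auto intro: assms(2) order.trans[OF of_nat_0_le_iff])
  then obtain l r where "l \<in> K" "strict_mono r" and "((\<lambda>n. x (s n)) \<circ> r) \<longlonglongrightarrow> l"
    by (rule seq_compactE[OF compact_imp_seq_compact[OF assms(1)]])
  then have lim: "(\<lambda>n. x (s (r n))) \<longlonglongrightarrow> l" by (simp add: o_def)
  have far_l: "e \<le> dist l c"
    by (rule LIMSEQ_le_const[OF tendsto_dist[OF lim tendsto_const]]) (use s(2) in auto)
  have "omega_limit_point x l"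
    unfolding omega_limit_point_def
  proof (intro allI impI)
    fix \<beta> :: real and T :: real assume "\<beta> > 0"
    then obtain N where N: "\<And>n. N \<le> n \<Longrightarrow> dist (x (s (r n))) l < \<beta>"
      using lim unfolding tendsto_iff eventually_sequentially by blast
    define n where "n = max N (nat \<lceil>T\<rceil>)"
    have "T \<le> real (nat \<lceil>T\<rceil>)" by (rule real_nat_ceiling_ge)
    also have "\<dots> \<le> real (r n)"
      using seq_suble[OF \<open>strict_mono r\<close>, of n] by (simp add: n_def)
    also have "\<dots> \<le> s (r n)" by (rule s(1))
    finally have "T \<le> s (r n)" .
    then show "\<exists>t\<ge>T. dist (x t) l < \<beta>" using N[of n] by (auto simp: n_def)
  qed
  moreover have "l \<noteq> c" using far_l \<open>e > 0\<close> by auto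
  ultimately show ?thesis using that \<open>l \<in> K\<close> by blast
qed

section \<open>Payoffs and the simplex\<close>

lemma
  shows payoff_add_left: "payoff U (x + y) z = payoff U x z + payoff U y z"
    and payoff_diff_left: "payoff U (x - y) z = payoff U x z - payoff U y z"
    and payoff_scaleR_left: "payoff U (r *\<^sub>R x) z = r * payoff U x z"
    and payoff_add_right: "payoff U x (y + z) = payoff U x y + payoff U x z"
    and payoff_diff_right: "payoff U x (y - z) = payoff U x y - payoff U x z"
    and payoff_scaleR_right: "payoff U x (r *\<^sub>R y) = r * payoff U x y"
  by (simp_all add: payoff_def inner_add_left inner_diff_left inner_add_right inner_diff_right
      matrix_vector_right_distrib matrix_vector_mult_diff_distrib matrix_vector_mult_scaleR)

lemma payoff_vfield: "payoff U y z = (\<Sum>a\<in>UNIV. y $ a * vfield U z a)"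
  by (simp add: payoff_def inner_vec_def vfield_def)

lemma payoff_sym:
  assumes "transpose U = U"
  shows "payoff U p q = payoff U q p"
  by (metis assms dot_lmul_matrix inner_commute payoff_def transpose_matrix_vector)

lemma bounded_bilinear_payoff: "bounded_bilinear (payoff U)"
  using bounded_bilinear.comp[OF bounded_bilinear_inner bounded_linear_ident matrix_vector_mul_bounded_linear]
  by (simp add: payoff_def[abs_def])

lemma continuous_on_payoff [continuous_intros]:
  "continuous_on S f \<Longrightarrow> continuous_on S g \<Longrightarrow> continuous_on S (\<lambda>y. payoff U (f y) (g y))"
  by (rule bounded_bilinear.continuous_on[OF bounded_bilinear_payoff])

lemma payoff_along_ray:
  "payoff U p (p + s *\<^sub>R z) - payoff U (p + s *\<^sub>R z) (p + s *\<^sub>R z)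
     = - s * payoff U z p - s\<^sup>2 * payoff U z z"
  by (simp add: payoff_add_left payoff_add_right payoff_scaleR_left payoff_scaleR_right
      power2_eq_square algebra_simps)

lemma compact_strat_simplex: "compact strat_simplex"
proof -
  have "strat_simplex \<subseteq> cball 0 1"
  proof
    fix x :: "real ^ 'n" assume x: "x \<in> strat_simplex"
    have "norm x \<le> (\<Sum>a\<in>UNIV. \<bar>x $ a\<bar>)" by (rule norm_le_l1_cart)
    also have "\<dots> = 1" using x by (simp add: strat_simplex_def)
    finally show "x \<in> cball 0 1" by simp
  qed
  moreover have "closed (strat_simplex :: (real ^ 'n) set)"
    unfolding strat_simplex_def Collect_conj_eq
    by (intro closed_Int closed_Collect_all closed_Collect_le closed_Collect_eq continuous_intros)
  ultimately show ?thesis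
    by (metis bounded_cball bounded_subset compact_eq_bounded_closed)
qed

lemma strat_simplex_payoff_bounded:
  obtains C where "\<And>y. y \<in> strat_simplex \<Longrightarrow> \<bar>payoff U y y\<bar> \<le> C"
proof -
  have "continuous_on strat_simplex (\<lambda>y. payoff U y y)" by (intro continuous_intros)
  then obtain C where "0 \<le> C" and C: "\<And>y. y \<in> strat_simplex \<Longrightarrow> norm (payoff U y y) \<le> C"
    by (rule continuous_on_compact_bound[OF compact_strat_simplex]) blast
  show ?thesis by (rule that) (use C in simp)
qed

lemma strat_simplex_nth_nonneg: "y \<in> strat_simplex \<Longrightarrow> 0 \<le> y $ a"
  by (simp add: strat_simplex_def)

lemma strat_simplex_ex_nth_pos:
  assumes "y \<in> strat_simplex" obtains a where "0 < y $ a"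
proof -
  have "\<not> (\<forall>a. y $ a = 0)"
  proof
    assume "\<forall>a. y $ a = 0"
    then have "(\<Sum>a\<in>UNIV. y $ a) = 0" by simp
    then show False using assms by (simp add: strat_simplex_def)
  qed
  then show ?thesis using strat_simplex_nth_nonneg[OF assms] that by (metis order.order_iff_strict)
qed

lemma strat_simplex_nth_le_1:
  assumes "y \<in> strat_simplex" shows "y $ a \<le> 1"
proof -
  have "y $ a \<le> (\<Sum>b\<in>UNIV. y $ b)"
    using assms by (intro member_le_sum) (auto simp: strat_simplex_def)
  then show ?thesis using assms by (simp add: strat_simplex_def)
qed

lemma strat_simplex_int_nth_pos:
  assumes "x \<in> strat_simplex_int"
  shows "x $ a > 0"
proof (rule ccontr)
  assume "\<not> x $ a > 0"
  obtain e where x: "x \<in> strat_simplex" and e: "e > 0"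
    and sub: "ball x e \<inter> affine hull strat_simplex \<subseteq> strat_simplex"
    using assms unfolding strat_simplex_int_def mem_rel_interior_ball by blast
  have xa: "x $ a = 0" using strat_simplex_nth_nonneg[OF x, of a] \<open>\<not> x $ a > 0\<close> by simp
  obtain b where "0 < x $ b" using strat_simplex_ex_nth_pos[OF x] .
  then have "b \<noteq> a" using xa by auto
  define y where "y = x + (e / 4) *\<^sub>R (axis b 1 - axis a 1)"
  have axes: "axis c 1 \<in> strat_simplex" for c
    by (simp add: strat_simplex_def axis_def)
  have "y \<in> affine hull strat_simplex"
    unfolding y_def by (intro mem_affine_3_minus affine_affine_hull hull_inc x axes)
  moreover have "y \<in> ball x e"
  proof -
    have "norm (axis b 1 - axis a (1::real)) \<le> 2"
      using norm_triangle_ineq4[of "axis b (1::real)" "axis a 1"] by simp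
    then show ?thesis using e by (simp add: y_def dist_norm)
  qed
  ultimately have "y \<in> strat_simplex" using sub by blast
  moreover have "y $ a < 0" using \<open>b \<noteq> a\<close> xa e by (simp add: y_def axis_def)
  ultimately show False by (simp add: strat_simplex_def not_le[symmetric])
qed

lemma pos_nth_lower_bound:
  fixes x :: "real ^ 'n::finite"
  obtains \<mu> where "\<mu> > 0" "\<And>a. 0 < x $ a \<Longrightarrow> \<mu> \<le> x $ a"
proof (cases "\<exists>a. 0 < x $ a")
  case True
  let ?P = "{a. 0 < x $ a}"
  show ?thesis
  proof (rule that[of "Min ((\<lambda>a. x $ a) ` ?P)"])
    show "Min ((\<lambda>a. x $ a) ` ?P) > 0" using True by auto
  qed auto
qed (rule that[of 1]; simp)

lemma strat_simplex_radial_extension: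
  assumes xs: "xs \<in> strat_simplex" and x: "x \<in> strat_simplex"
    and coords: "\<And>a. 0 < xs $ a \<Longrightarrow> \<rho> \<le> xs $ a"
    and d: "0 < dist x xs" "dist x xs \<le> \<rho>"
  shows "xs + (\<rho> / dist x xs) *\<^sub>R (x - xs) \<in> strat_simplex"
proof -
  define y where "y = xs + (\<rho> / dist x xs) *\<^sub>R (x - xs)"
  have "\<rho> > 0" using d by linarith
  have "dist y xs = \<bar>\<rho> / dist x xs\<bar> * dist x xs" by (simp add: y_def dist_norm)
  also have "\<dots> = \<rho>" using d by (simp add: abs_of_pos[OF \<open>\<rho> > 0\<close>])
  finally have "dist y xs = \<rho>" .
  have "0 \<le> y $ a" for a
  proof (cases "0 < xs $ a")
    case True
    have "\<bar>(y - xs) $ a\<bar> \<le> \<rho>"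
      using component_le_norm_cart[of "y - xs" a] \<open>dist y xs = \<rho>\<close> by (simp add: dist_norm)
    then show ?thesis using coords[OF True] by simp
  next
    case False
    then have "xs $ a = 0" using strat_simplex_nth_nonneg[OF xs, of a] by simp
    moreover have "0 \<le> \<rho> / dist x xs * x $ a"
      using strat_simplex_nth_nonneg[OF x, of a] \<open>\<rho> > 0\<close>
      by (intro mult_nonneg_nonneg divide_nonneg_nonneg) auto
    ultimately show ?thesis by (simp add: y_def)
  qed
  moreover have "(\<Sum>a\<in>UNIV. y $ a)
      = (\<Sum>a\<in>UNIV. xs $ a) + \<rho> / dist x xs * ((\<Sum>a\<in>UNIV. x $ a) - (\<Sum>a\<in>UNIV. xs $ a))"
    by (simp add: y_def sum.distrib sum_subtractf sum_divide_distrib[symmetric] flip: sum_distrib_left)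
  then have "(\<Sum>a\<in>UNIV. y $ a) = 1" using xs x by (simp add: strat_simplex_def)
  ultimately show ?thesis by (simp add: y_def strat_simplex_def)
qed

lemma payoff_eq_at_rest_point:
  assumes l: "l \<in> strat_simplex" and xs: "xs \<in> strat_simplex"
    and rest: "\<And>a b. 0 < l $ a \<Longrightarrow> 0 < l $ b \<Longrightarrow> vfield U l a \<le> vfield U l b"
    and support: "\<And>a. 0 < xs $ a \<Longrightarrow> 0 < l $ a"
  shows "payoff U xs l = payoff U l l"
proof -
  obtain a0 where "0 < l $ a0" using strat_simplex_ex_nth_pos[OF l] .
  \<comment> \<open>all strategies in the support of a rest point earn the same payoff \<open>c\<close>\<close>
  define c where "c = vfield U l a0"
  have eq: "y $ a * vfield U l a = y $ a * c" if "y \<in> strat_simplex" "0 < y $ a \<Longrightarrow> 0 < l $ a" for y a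
  proof (cases "0 < y $ a")
    case True
    then show ?thesis using that rest[of a a0] rest[of a0 a] \<open>0 < l $ a0\<close> by (simp add: c_def)
  next
    case False
    then show ?thesis using strat_simplex_nth_nonneg[OF that(1), of a] by simp
  qed
  have payoff_c: "payoff U y l = c" if "y \<in> strat_simplex" "\<And>a. 0 < y $ a \<Longrightarrow> 0 < l $ a" for y
  proof -
    have "payoff U y l = (\<Sum>a\<in>UNIV. y $ a * c)"
      unfolding payoff_vfield by (rule sum.cong[OF refl]) (rule eq[OF that(1) that(2)])
    then show ?thesis using that(1) by (simp add: strat_simplex_def flip: sum_distrib_right)
  qed
  show ?thesis using payoff_c[OF xs support] payoff_c[OF l] by simp
qed

section \<open>Evolutionary stability\<close>

lemma superior_if_sphere_margin:
  assumes xs: "xs \<in> strat_simplex" and "\<rho> > 0"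
    and coords: "\<And>a. 0 < xs $ a \<Longrightarrow> \<rho> \<le> xs $ a"
    and margin: "\<And>y s. y \<in> strat_simplex \<Longrightarrow> dist y xs = \<rho> \<Longrightarrow> 0 < s \<Longrightarrow> s < s0 \<Longrightarrow>
        s * payoff U (y - xs) (y - xs) < payoff U xs xs - payoff U y xs"
    and x: "x \<in> strat_simplex" "0 < dist x xs" "dist x xs \<le> \<rho>" "dist x xs < s0 * \<rho>"
  shows "payoff U x x < payoff U xs x"
proof -
  \<comment> \<open>write \<open>x = xs + s (y - xs)\<close> with \<open>y\<close> on the sphere of radius \<open>\<rho>\<close>\<close>
  define s where "s = dist x xs / \<rho>"
  define y where "y = xs + (\<rho> / dist x xs) *\<^sub>R (x - xs)"
  have s: "0 < s" "s < s0" using x(2,4) \<open>\<rho> > 0\<close> by (auto simp: s_def field_simps)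
  have "y \<in> strat_simplex"
    unfolding y_def by (rule strat_simplex_radial_extension[OF xs x(1) coords x(2,3)])
  moreover have "dist y xs = \<rho>" using x(2) \<open>\<rho> > 0\<close> by (simp add: y_def dist_norm)
  ultimately have "s * payoff U (y - xs) (y - xs) < payoff U xs xs - payoff U y xs"
    using margin s by blast
  have x_eq: "x = xs + s *\<^sub>R (y - xs)" using x(2) \<open>\<rho> > 0\<close> by (simp add: y_def s_def)
  have "payoff U xs x - payoff U x x = - s * payoff U (y - xs) xs - s\<^sup>2 * payoff U (y - xs) (y - xs)"
    unfolding x_eq by (rule payoff_along_ray)
  also have "\<dots> = s * ((payoff U xs xs - payoff U y xs) - s * payoff U (y - xs) (y - xs))"
    by (simp add: payoff_diff_left power2_eq_square algebra_simps)
  also have "\<dots> > 0" using \<open>s * payoff U (y - xs) (y - xs) < _\<close> s by simp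
  finally show ?thesis by simp
qed

lemma ESS_sphere_margin:
  assumes ess: "\<And>y. y \<in> strat_simplex \<Longrightarrow> 0 < dist y xs \<Longrightarrow> dist y xs < r0 \<Longrightarrow>
      payoff U y xs \<le> payoff U xs xs \<and> (payoff U xs xs = payoff U y xs \<longrightarrow> payoff U y y < payoff U xs y)"
    and "0 < \<rho>" "\<rho> < r0"
  obtains s0 where "s0 > 0" "\<And>y s. y \<in> strat_simplex \<Longrightarrow> dist y xs = \<rho> \<Longrightarrow> 0 < s \<Longrightarrow> s < s0 \<Longrightarrow>
      s * payoff U (y - xs) (y - xs) < payoff U xs xs - payoff U y xs"
proof -
  define Y where "Y = strat_simplex \<inter> {y. dist y xs = \<rho>}"
  have ess_Y: "payoff U y xs \<le> payoff U xs xs \<and> (payoff U xs xs = payoff U y xs \<longrightarrow> payoff U y y < payoff U xs y)"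
    if "y \<in> Y" for y
    using that assms(2,3) by (intro ess) (auto simp: Y_def)
  have "compact Y" unfolding Y_def
    by (intro compact_Int_closed compact_strat_simplex closed_Collect_eq continuous_intros)
  moreover have "continuous_on Y (\<lambda>y. payoff U xs xs - payoff U y xs)"
    "continuous_on Y (\<lambda>y. payoff U (y - xs) (y - xs))"
    by (intro continuous_intros)+
  moreover have "0 \<le> payoff U xs xs - payoff U y xs" if "y \<in> Y" for y
    using ess_Y[OF that] by simp
  moreover have "payoff U (y - xs) (y - xs) < 0" if "y \<in> Y" "payoff U xs xs - payoff U y xs = 0" for y
    using ess_Y[OF that(1)] that(2) by (simp add: payoff_diff_left payoff_diff_right)
  ultimately obtain s0 where "s0 > 0" "\<And>y s. y \<in> Y \<Longrightarrow> 0 < s \<Longrightarrow> s < s0 \<Longrightarrow>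
      s * payoff U (y - xs) (y - xs) < payoff U xs xs - payoff U y xs"
    using continuous_on_compact_uniform_margin by blast
  then show ?thesis using that by (auto simp: Y_def)
qed

lemma ESS_locally_superior:
  assumes "ESS U xs"
  obtains \<rho> where "\<rho> > 0"
    and "\<And>y. y \<in> strat_simplex \<Longrightarrow> dist y xs < \<rho> \<Longrightarrow> payoff U y xs \<le> payoff U xs xs"
    and "\<And>y. y \<in> strat_simplex \<Longrightarrow> 0 < dist y xs \<Longrightarrow> dist y xs < \<rho> \<Longrightarrow> payoff U y y < payoff U xs y"
proof -
  obtain W where xs: "xs \<in> strat_simplex" and W: "openin (top_of_set strat_simplex) W" "xs \<in> W"
    and ess: "\<And>y. y \<in> W \<Longrightarrow> payoff U y xs \<le> payoff U xs xs \<and>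
           (payoff U xs xs = payoff U y xs \<and> y \<noteq> xs \<longrightarrow> payoff U y y < payoff U xs y)"
    using assms unfolding ESS_def by blast
  obtain r0 where "r0 > 0" and r0: "ball xs r0 \<inter> strat_simplex \<subseteq> W"
    using W unfolding openin_contains_ball by blast
  have ess_ball: "y \<in> W" if "y \<in> strat_simplex" "dist y xs < r0" for y
    using that r0 by (auto simp: dist_commute)
  obtain \<mu> where \<mu>: "\<mu> > 0" "\<And>a. 0 < xs $ a \<Longrightarrow> \<mu> \<le> xs $ a"
    using pos_nth_lower_bound by blast
  define \<rho>0 where "\<rho>0 = min r0 \<mu> / 2"
  have \<rho>0: "\<rho>0 > 0" "\<rho>0 < r0" "\<rho>0 < \<mu>" using \<open>r0 > 0\<close> \<mu> by (auto simp: \<rho>0_def)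
  have coords: "\<rho>0 \<le> xs $ a" if "0 < xs $ a" for a using \<mu>(2)[OF that] \<rho>0(3) by linarith
  obtain s0 where "s0 > 0" and margin: "\<And>y s. y \<in> strat_simplex \<Longrightarrow> dist y xs = \<rho>0 \<Longrightarrow> 0 < s \<Longrightarrow> s < s0 \<Longrightarrow>
      s * payoff U (y - xs) (y - xs) < payoff U xs xs - payoff U y xs"
  proof (rule ESS_sphere_margin[OF _ \<rho>0(1,2)])
    show "payoff U y xs \<le> payoff U xs xs \<and> (payoff U xs xs = payoff U y xs \<longrightarrow> payoff U y y < payoff U xs y)"
      if "y \<in> strat_simplex" "0 < dist y xs" "dist y xs < r0" for y
      using ess[OF ess_ball[OF that(1,3)]] that(2) by auto
  qed blast
  define \<rho> where "\<rho> = min s0 1 * \<rho>0"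
  have "\<rho> \<le> \<rho>0" "\<rho> \<le> s0 * \<rho>0" using \<rho>0 by (auto simp: \<rho>_def intro: mult_right_mono)
  show ?thesis
  proof (rule that[of \<rho>])
    show "\<rho> > 0" using \<open>s0 > 0\<close> \<rho>0 by (simp add: \<rho>_def)
    show "payoff U y xs \<le> payoff U xs xs" if "y \<in> strat_simplex" "dist y xs < \<rho>" for y
      using ess ess_ball that \<open>\<rho> \<le> \<rho>0\<close> \<rho>0 by fastforce
    show "payoff U y y < payoff U xs y"
      if "y \<in> strat_simplex" "0 < dist y xs" "dist y xs < \<rho>" for y
      using that \<open>\<rho> \<le> \<rho>0\<close> \<open>\<rho> \<le> s0 * \<rho>0\<close>
      by (intro superior_if_sphere_margin[OF xs \<open>\<rho>0 > 0\<close> coords margin]) auto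
  qed
qed

lemma symmetric_ESS_basin:
  assumes sym: "transpose U = U" and ess: "ESS U xs"
  obtains r \<gamma> where "r > 0" "\<gamma> > 0"
    and "\<And>y. y \<in> strat_simplex \<Longrightarrow> dist y xs = r \<Longrightarrow> payoff U y y \<le> payoff U xs xs - \<gamma>"
    and "\<And>y. y \<in> strat_simplex \<Longrightarrow> 0 < dist y xs \<Longrightarrow> dist y xs \<le> r \<Longrightarrow> payoff U y y < payoff U xs y"
    and "\<And>a. 0 < xs $ a \<Longrightarrow> r < xs $ a"
proof -
  obtain \<rho> where "\<rho> > 0"
    and nash: "\<And>y. y \<in> strat_simplex \<Longrightarrow> dist y xs < \<rho> \<Longrightarrow> payoff U y xs \<le> payoff U xs xs"
    and superior: "\<And>y. y \<in> strat_simplex \<Longrightarrow> 0 < dist y xs \<Longrightarrow> dist y xs < \<rho> \<Longrightarrow> payoff U y y < payoff U xs y"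
    using ESS_locally_superior[OF ess] by blast
  obtain \<mu> where "\<mu> > 0" and \<mu>: "\<And>a. 0 < xs $ a \<Longrightarrow> \<mu> \<le> xs $ a"
    using pos_nth_lower_bound by blast
  define r where "r = min \<rho> \<mu> / 2"
  have "r > 0" "r < \<rho>" "r < \<mu>" using \<open>\<rho> > 0\<close> \<open>\<mu> > 0\<close> by (auto simp: r_def)
  define S where "S = strat_simplex \<inter> {y. dist y xs = r}"
  \<comment> \<open>for symmetric payoffs, superiority and the Nash property make \<open>xs\<close> a strict local maximum of \<open>u(y,y)\<close>\<close>
  have "0 < payoff U xs xs - payoff U y y" if "y \<in> S" for y
    using that superior[of y] nash[of y] payoff_sym[OF sym, of xs y] \<open>r > 0\<close> \<open>r < \<rho>\<close>
    by (simp add: S_def)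
  moreover have "compact S" unfolding S_def
    by (intro compact_Int_closed compact_strat_simplex closed_Collect_eq continuous_intros)
  moreover have "continuous_on S (\<lambda>y. payoff U xs xs - payoff U y y)" by (intro continuous_intros)
  ultimately obtain \<gamma> where "\<gamma> > 0" "\<And>y. y \<in> S \<Longrightarrow> \<gamma> \<le> payoff U xs xs - payoff U y y"
    using continuous_on_compact_pos_lower_bound by blast
  then show ?thesis
    using that[of r \<gamma>] \<open>r > 0\<close> \<open>r < \<rho>\<close> \<open>r < \<mu>\<close> superior \<mu> by (force simp: S_def)
qed

section \<open>Kernels and the inertial dynamics\<close>

lemma kernel_d2_pos: "kernel \<theta> \<Longrightarrow> 0 < z \<Longrightarrow> 0 < (deriv ^^ 2) \<theta> z"
  unfolding kernel_def by blast

lemma kernel_d3_neg: "kernel \<theta> \<Longrightarrow> 0 < z \<Longrightarrow> (deriv ^^ 3) \<theta> z < 0"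
  unfolding kernel_def by blast

lemma kernel_has_derivative_d2:
  assumes "kernel \<theta>" "0 < z"
  shows "((deriv ^^ 2) \<theta> has_real_derivative (deriv ^^ 3) \<theta> z) (at z)"
proof -
  have "(deriv ^^ 2) \<theta> differentiable (at z)" using assms unfolding kernel_def by blast
  moreover have "(deriv ^^ 3) \<theta> = deriv ((deriv ^^ 2) \<theta>)"
    by (simp add: numeral_3_eq_3 numeral_2_eq_2)
  ultimately show ?thesis by (simp only: DERIV_deriv_iff_real_differentiable)
qed

lemma kernel_isCont_d2: "kernel \<theta> \<Longrightarrow> 0 < z \<Longrightarrow> isCont ((deriv ^^ 2) \<theta>) z"
  using kernel_has_derivative_d2 DERIV_isCont by blast

lemma kernel_isCont_d3: "kernel \<theta> \<Longrightarrow> 0 < z \<Longrightarrow> isCont ((deriv ^^ 3) \<theta>) z"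
  unfolding kernel_def by (blast intro: differentiable_imp_continuous_within)

lemma kernel_d2_antimono:
  assumes "kernel \<theta>" "0 < z" "z \<le> z'"
  shows "(deriv ^^ 2) \<theta> z' \<le> (deriv ^^ 2) \<theta> z"
  using assms kernel_has_derivative_d2 kernel_d3_neg
  by (intro DERIV_nonpos_imp_nonincreasing[OF assms(3)]) (meson less_imp_le less_le_trans)

definition kinetic_energy :: "(real \<Rightarrow> real) \<Rightarrow> real ^ 'n::finite \<Rightarrow> real ^ 'n \<Rightarrow> real" where
  "kinetic_energy \<theta> y w = (\<Sum>a\<in>UNIV. (deriv ^^ 2) \<theta> (y $ a) * (w $ a)\<^sup>2)"

lemma speed_eq_sqrt_kinetic_energy: "speed \<theta> y w = sqrt (kinetic_energy \<theta> y w)"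
  by (simp add: speed_def kinetic_energy_def)

text \<open>The coordinate-independent part of (ID): the multiplier keeping the motion on the simplex.\<close>
definition ID_multiplier :: "(real \<Rightarrow> real) \<Rightarrow> real ^ 'n::finite ^ 'n \<Rightarrow> real ^ 'n \<Rightarrow> real ^ 'n \<Rightarrow> real" where
  "ID_multiplier \<theta> U y w =
     (\<Sum>b\<in>UNIV. Theta2 \<theta> y / (deriv ^^ 2) \<theta> (y $ b)
        * ((1/2) * (deriv ^^ 3) \<theta> (y $ b) * (w $ b)\<^sup>2 - vfield U y b))"

lemma ID_rhs_momentum_form:
  assumes "(deriv ^^ 2) \<theta> (y $ a) \<noteq> 0"
  shows "(deriv ^^ 2) \<theta> (y $ a) * ID_rhs \<theta> U \<eta> y w a
    = vfield U y a - (1/2) * (deriv ^^ 3) \<theta> (y $ a) * (w $ a)\<^sup>2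
      - \<eta> * ((deriv ^^ 2) \<theta> (y $ a) * w $ a) + ID_multiplier \<theta> U y w"
proof -
  define q where "q b = Theta2 \<theta> y / (deriv ^^ 2) \<theta> (y $ b)" for b
  define C where "C = (\<Sum>b\<in>UNIV. q b * vfield U y b)"
  define D where "D = (\<Sum>b\<in>UNIV. q b * (deriv ^^ 3) \<theta> (y $ b) * (w $ b)\<^sup>2)"
  have multiplier: "ID_multiplier \<theta> U y w = (1/2) * D - C"
    unfolding ID_multiplier_def C_def D_def q_def
    by (simp add: sum_subtractf sum_distrib_left right_diff_distrib mult_ac)
  have rhs: "ID_rhs \<theta> U \<eta> y w a = (1 / (deriv ^^ 2) \<theta> (y $ a)) * (vfield U y a - C)
      - (1 / (2 * (deriv ^^ 2) \<theta> (y $ a))) * ((deriv ^^ 3) \<theta> (y $ a) * (w $ a)\<^sup>2 - D)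
      - \<eta> * w $ a"
    by (simp add: ID_rhs_def Let_def C_def D_def q_def)
  show ?thesis unfolding multiplier rhs using assms by (simp add: field_simps)
qed

definition momentum_gap :: "(real \<Rightarrow> real) \<Rightarrow> 'n \<Rightarrow> 'n \<Rightarrow> real ^ 'n::finite \<Rightarrow> real ^ 'n \<Rightarrow> real" where
  "momentum_gap \<theta> a b y w = (deriv ^^ 2) \<theta> (y $ a) * w $ a - (deriv ^^ 2) \<theta> (y $ b) * w $ b"

definition momentum_gap_rate ::
    "(real \<Rightarrow> real) \<Rightarrow> real ^ 'n ^ 'n \<Rightarrow> real \<Rightarrow> 'n \<Rightarrow> 'n \<Rightarrow> real ^ 'n::finite \<Rightarrow> real ^ 'n \<Rightarrow> real" where
  "momentum_gap_rate \<theta> U \<eta> a b y w = vfield U y a - vfield U y b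
     + (1/2) * (deriv ^^ 3) \<theta> (y $ a) * (w $ a)\<^sup>2 - (1/2) * (deriv ^^ 3) \<theta> (y $ b) * (w $ b)\<^sup>2
     - \<eta> * momentum_gap \<theta> a b y w"

lemma momentum_gap_near_rest:
  fixes l :: "real ^ 'n::finite"
  assumes "kernel \<theta>" "0 < l $ a" "0 < l $ b" "A < vfield U l a - vfield U l b"
  obtains \<beta>1 \<beta>2 where "\<beta>1 > 0" "\<beta>2 > 0"
    and "\<And>y w. dist y l < \<beta>1 \<Longrightarrow> norm w < \<beta>2 \<Longrightarrow>
           A < momentum_gap_rate \<theta> U \<eta> a b y w \<and> \<bar>momentum_gap \<theta> a b y w\<bar> < 1"
proof -
  define G where "G p = momentum_gap_rate \<theta> U \<eta> a b (fst p) (snd p)" for p :: "(real ^ 'n) \<times> (real ^ 'n)"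
  define P where "P p = momentum_gap \<theta> a b (fst p) (snd p)" for p :: "(real ^ 'n) \<times> (real ^ 'n)"
  have cont_d: "isCont (\<lambda>p. (deriv ^^ k) \<theta> (fst p $ c)) (l, 0)" if "k = 2 \<or> k = 3" "0 < l $ c" for k c
  proof (rule isCont_o2[where f = "\<lambda>p. fst p $ c" and g = "(deriv ^^ k) \<theta>"])
    show "isCont (\<lambda>p. fst p $ c) (l, 0)" by (intro isCont_vec_nth continuous_intros)
    show "isCont ((deriv ^^ k) \<theta>) (fst (l, 0) $ c)"
      using that kernel_isCont_d2[OF assms(1)] kernel_isCont_d3[OF assms(1)] by auto
  qed
  have "isCont (\<lambda>p. U *v fst p) (l, 0)"
    by (rule isCont_o2[where g = "(*v) U"]) (auto intro: linear_continuous_at matrix_vector_mul_linear)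
  then have "isCont G (l, 0)" "isCont P (l, 0)"
    unfolding G_def P_def momentum_gap_rate_def momentum_gap_def vfield_def
    using cont_d assms(2,3) by (auto intro!: continuous_intros)
  moreover have "G (l, 0) = vfield U l a - vfield U l b" "P (l, 0) = 0"
    by (simp_all add: G_def P_def momentum_gap_rate_def momentum_gap_def)
  ultimately have "(G \<longlongrightarrow> vfield U l a - vfield U l b) (nhds (l, 0))" "((\<lambda>p. \<bar>P p\<bar>) \<longlongrightarrow> 0) (nhds (l, 0))"
    unfolding isCont_def tendsto_at_iff_tendsto_nhds by (auto dest: tendsto_rabs)
  then have "eventually (\<lambda>p. A < G p \<and> \<bar>P p\<bar> < 1) (nhds (l, 0))"
    using assms(4) by (intro eventually_conj order_tendstoD) auto
  then obtain \<beta>1 \<beta>2 where "\<beta>1 > 0" "\<beta>2 > 0"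
    and "\<And>y w. dist y l < \<beta>1 \<Longrightarrow> dist w 0 < \<beta>2 \<Longrightarrow> A < G (y, w) \<and> \<bar>P (y, w)\<bar> < 1"
    by (rule eventually_nhds_Pair_metric) blast
  then show ?thesis using that by (simp add: G_def P_def)
qed

locale ID_trajectory =
  fixes \<theta> :: "real \<Rightarrow> real" and U :: "real ^ 'n::finite ^ 'n" and \<eta> :: real
    and x v :: "real \<Rightarrow> real ^ 'n"
  assumes solution: "ID_solution \<theta> U \<eta> x v"
    and kernel: "kernel \<theta>"
    and symmetric: "transpose U = U"
    and damping: "\<eta> > 0"
begin

lemma in_strat_simplex: "0 \<le> t \<Longrightarrow> x t \<in> strat_simplex"
  using solution rel_interior_subset unfolding ID_solution_def strat_simplex_int_def by blast

lemma nth_pos: "0 \<le> t \<Longrightarrow> 0 < x t $ a"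
  using solution strat_simplex_int_nth_pos unfolding ID_solution_def by blast

lemma d2_pos: "0 \<le> t \<Longrightarrow> 0 < (deriv ^^ 2) \<theta> (x t $ a)"
  using kernel_d2_pos[OF kernel nth_pos] .

lemma has_vector_derivative_x: "0 \<le> t \<Longrightarrow> (x has_vector_derivative v t) (at t within {0..})"
  using solution unfolding ID_solution_def by blast

lemma continuous_on_x: "continuous_on {0..} x"
  unfolding continuous_on_eq_continuous_within
  by (meson atLeast_iff has_vector_derivative_continuous has_vector_derivative_x)

lemma has_derivative_x_nth:
  "0 \<le> t \<Longrightarrow> ((\<lambda>s. x s $ a) has_real_derivative v t $ a) (at t within {0..})"
  using bounded_linear.has_vector_derivative[OF bounded_linear_vec_nth has_vector_derivative_x]
  by (simp add: has_real_derivative_iff_has_vector_derivative)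

lemma has_derivative_v_nth:
  "0 \<le> t \<Longrightarrow> ((\<lambda>s. v s $ a) has_real_derivative ID_rhs \<theta> U \<eta> (x t) (v t) a) (at t within {0..})"
proof -
  assume "0 \<le> t"
  then obtain acc where "(v has_vector_derivative acc) (at t within {0..})"
    "\<forall>a. acc $ a = ID_rhs \<theta> U \<eta> (x t) (v t) a"
    using solution unfolding ID_solution_def by blast
  then show ?thesis
    using bounded_linear.has_vector_derivative[OF bounded_linear_vec_nth]
    by (metis has_real_derivative_iff_has_vector_derivative)
qed

lemma sum_v_eq_0:
  assumes "0 \<le> t" shows "(\<Sum>a\<in>UNIV. v t $ a) = 0"
proof -
  have "((\<lambda>s. \<Sum>a\<in>UNIV. x s $ a) has_real_derivative (\<Sum>a\<in>UNIV. v t $ a)) (at t within {0..})"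
    by (intro DERIV_sum has_derivative_x_nth assms)
  moreover have "((\<lambda>s. \<Sum>a\<in>UNIV. x s $ a) has_real_derivative 0) (at t within {0..})"
    by (rule has_field_derivative_transform_within[of "\<lambda>_. 1" _ _ _ 1])
       (use assms in_strat_simplex in \<open>auto simp: strat_simplex_def\<close>)
  moreover have "at t within {0..} \<noteq> bot"
    using islimpt_subset[of t "{t..t+1}" "{0..}"] assms by (simp add: trivial_limit_within)
  ultimately show ?thesis by (rule has_field_derivative_unique)
qed

lemma has_derivative_d2_x:
  "0 \<le> t \<Longrightarrow> ((\<lambda>s. (deriv ^^ 2) \<theta> (x s $ a)) has_real_derivative
     (deriv ^^ 3) \<theta> (x t $ a) * v t $ a) (at t within {0..})"
  by (rule DERIV_chain2[OF kernel_has_derivative_d2[OF kernel nth_pos] has_derivative_x_nth])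

lemma ID_rhs_along_trajectory:
  assumes "0 \<le> t"
  shows "ID_rhs \<theta> U \<eta> (x t) (v t) a
    = (vfield U (x t) a - (1/2) * (deriv ^^ 3) \<theta> (x t $ a) * (v t $ a)\<^sup>2
       - \<eta> * ((deriv ^^ 2) \<theta> (x t $ a) * v t $ a) + ID_multiplier \<theta> U (x t) (v t))
      / (deriv ^^ 2) \<theta> (x t $ a)"
  using ID_rhs_momentum_form[where y = "x t" and w = "v t" and a = a] d2_pos[OF assms, of a]
  by (simp add: eq_divide_eq mult.commute)

lemma has_derivative_momentum:
  assumes "0 \<le> t"
  shows "((\<lambda>s. (deriv ^^ 2) \<theta> (x s $ a) * v s $ a) has_real_derivative
     vfield U (x t) a + (1/2) * (deriv ^^ 3) \<theta> (x t $ a) * (v t $ a)\<^sup>2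
       - \<eta> * ((deriv ^^ 2) \<theta> (x t $ a) * v t $ a) + ID_multiplier \<theta> U (x t) (v t)) (at t within {0..})"
  by (rule DERIV_cong[OF DERIV_mult[OF has_derivative_d2_x[OF assms] has_derivative_v_nth[OF assms]]])
    (use d2_pos[OF assms, of a] in \<open>simp add: ID_rhs_along_trajectory[OF assms] field_simps power2_eq_square\<close>)

lemma has_derivative_momentum_gap:
  assumes "0 \<le> t"
  shows "((\<lambda>s. momentum_gap \<theta> a b (x s) (v s)) has_real_derivative
     momentum_gap_rate \<theta> U \<eta> a b (x t) (v t)) (at t within {0..})"
  unfolding momentum_gap_def
  by (rule DERIV_cong[OF DERIV_diff[OF has_derivative_momentum[OF assms] has_derivative_momentum[OF assms]]])
    (simp add: momentum_gap_rate_def momentum_gap_def algebra_simps)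

lemma has_derivative_kinetic_energy:
  assumes "0 \<le> t"
  shows "((\<lambda>s. kinetic_energy \<theta> (x s) (v s)) has_real_derivative
     2 * payoff U (v t) (x t) - 2 * \<eta> * kinetic_energy \<theta> (x t) (v t)) (at t within {0..})"
proof -
  let ?m = "ID_multiplier \<theta> U (x t) (v t)"
  have "((\<lambda>s. (deriv ^^ 2) \<theta> (x s $ a) * (v s $ a)\<^sup>2) has_real_derivative
      2 * (v t $ a * vfield U (x t) a) - 2 * \<eta> * ((deriv ^^ 2) \<theta> (x t $ a) * (v t $ a)\<^sup>2)
      + 2 * ?m * v t $ a) (at t within {0..})" for a
    by (rule DERIV_cong[OF DERIV_mult[OF has_derivative_d2_x[OF assms]
          DERIV_power[OF has_derivative_v_nth[OF assms]]]])
      (use d2_pos[OF assms, of a] in \<open>simp add: ID_rhs_along_trajectory[OF assms] field_simps power2_eq_square\<close>)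
  then have "((\<lambda>s. kinetic_energy \<theta> (x s) (v s)) has_real_derivative
      2 * payoff U (v t) (x t) - 2 * \<eta> * kinetic_energy \<theta> (x t) (v t)
      + 2 * ?m * (\<Sum>a\<in>UNIV. v t $ a)) (at t within {0..})"
    unfolding kinetic_energy_def payoff_vfield
    by (intro DERIV_cong[OF DERIV_sum]) (auto simp: sum.distrib sum_subtractf sum_distrib_left)
  \<comment> \<open>the multiplier drops out because the velocity is tangent to the simplex\<close>
  then show ?thesis using sum_v_eq_0[OF assms] by simp
qed

lemma has_derivative_payoff_diag:
  assumes "0 \<le> t"
  shows "((\<lambda>s. payoff U (x s) (x s)) has_real_derivative 2 * payoff U (v t) (x t)) (at t within {0..})"
  unfolding has_real_derivative_iff_has_vector_derivative
  using bounded_bilinear.has_vector_derivative[OF bounded_bilinear_payoff[of U]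
      has_vector_derivative_x[OF assms] has_vector_derivative_x[OF assms]]
  by (simp add: payoff_sym[OF symmetric, of "x t"])

lemma kinetic_energy_nonneg: "0 \<le> t \<Longrightarrow> 0 \<le> kinetic_energy \<theta> (x t) (v t)"
  unfolding kinetic_energy_def using d2_pos by (intro sum_nonneg) (simp add: less_imp_le)

definition energy :: "real \<Rightarrow> real" where
  "energy t = kinetic_energy \<theta> (x t) (v t) - payoff U (x t) (x t)"

lemma has_derivative_energy:
  "0 \<le> t \<Longrightarrow> (energy has_real_derivative - 2 * \<eta> * kinetic_energy \<theta> (x t) (v t)) (at t within {0..})"
  unfolding energy_def[abs_def]
  using DERIV_diff[OF has_derivative_kinetic_energy has_derivative_payoff_diag] by simp

lemma energy_antimono:
  assumes "0 \<le> s" "s \<le> t" shows "energy t \<le> energy s"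
proof -
  have "energy t - energy s \<le> 0 * (t - s)"
    using assms damping kinetic_energy_nonneg
    by (intro has_real_derivative_increment_le[OF assms(2) _ has_derivative_energy]) auto
  then show ?thesis by simp
qed

lemma dist_less_if_energy_below:
  assumes sphere: "\<And>y. y \<in> strat_simplex \<Longrightarrow> dist y xs = r \<Longrightarrow> payoff U y y \<le> c"
    and start: "dist (x 0) xs < r" and low: "energy 0 < - c" and "0 \<le> t"
  shows "dist (x t) xs < r"
proof (rule ccontr)
  assume "\<not> dist (x t) xs < r"
  moreover have "continuous_on {0..t} (\<lambda>s. dist (x s) xs)"
    by (intro continuous_intros continuous_on_subset[OF continuous_on_x]) auto
  ultimately obtain s where s: "0 \<le> s" "s \<le> t" "dist (x s) xs = r"
    using IVT'[of "\<lambda>s. dist (x s) xs" 0 r t] start \<open>0 \<le> t\<close> by auto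
  have "energy s \<le> energy 0" by (rule energy_antimono[OF order.refl s(1)])
  then have "c < payoff U (x s) (x s)"
    using low kinetic_energy_nonneg[OF s(1)] unfolding energy_def by linarith
  then show False using sphere[OF in_strat_simplex[OF s(1)] s(3)] by linarith
qed

section \<open>Asymptotics of trajectories\<close>

lemma kinetic_energy_ge_norm:
  assumes "0 \<le> t" shows "(deriv ^^ 2) \<theta> 1 * (norm (v t))\<^sup>2 \<le> kinetic_energy \<theta> (x t) (v t)"
proof -
  have "(deriv ^^ 2) \<theta> 1 * (norm (v t))\<^sup>2 = (\<Sum>a\<in>UNIV. (deriv ^^ 2) \<theta> 1 * (v t $ a)\<^sup>2)"
    unfolding power2_norm_eq_inner inner_vec_def by (simp add: power2_eq_square sum_distrib_left)
  also have "\<dots> \<le> kinetic_energy \<theta> (x t) (v t)"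
    unfolding kinetic_energy_def
    using kernel_d2_antimono[OF kernel nth_pos[OF assms] strat_simplex_nth_le_1[OF in_strat_simplex[OF assms]]]
    by (intro sum_mono mult_right_mono) auto
  finally show ?thesis .
qed

lemma kinetic_energy_bounded:
  obtains Kmax where "0 \<le> Kmax" "\<And>t. 0 \<le> t \<Longrightarrow> kinetic_energy \<theta> (x t) (v t) \<le> Kmax"
proof -
  obtain C where C: "\<And>y. y \<in> strat_simplex \<Longrightarrow> \<bar>payoff U y y\<bar> \<le> C"
    using strat_simplex_payoff_bounded by blast
  have "kinetic_energy \<theta> (x t) (v t) \<le> energy 0 + C" if "0 \<le> t" for t
    using energy_antimono[OF order.refl that] C[OF in_strat_simplex[OF that]]
    unfolding energy_def by linarith
  moreover have "0 \<le> energy 0 + C" using calculation[of 0] kinetic_energy_nonneg[of 0] by simp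
  ultimately show ?thesis using that by blast
qed

lemma norm_v_bounded:
  obtains V where "\<And>t. 0 \<le> t \<Longrightarrow> norm (v t) \<le> V"
proof -
  obtain Kmax where "0 \<le> Kmax" and Kmax: "\<And>t. 0 \<le> t \<Longrightarrow> kinetic_energy \<theta> (x t) (v t) \<le> Kmax"
    using kinetic_energy_bounded by blast
  define m where "m = (deriv ^^ 2) \<theta> 1"
  have "m > 0" unfolding m_def by (simp add: kernel_d2_pos[OF kernel])
  have "norm (v t) \<le> sqrt (Kmax / m)" if "0 \<le> t" for t
  proof (rule real_le_rsqrt)
    have "m * (norm (v t))\<^sup>2 \<le> Kmax"
      using kinetic_energy_ge_norm[OF that] Kmax[OF that] unfolding m_def by linarith
    then show "(norm (v t))\<^sup>2 \<le> Kmax / m" using \<open>m > 0\<close> by (simp add: field_simps)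
  qed
  then show ?thesis using that by blast
qed

lemma kinetic_energy_derivative_bounded:
  obtains L where "\<And>t. 0 \<le> t \<Longrightarrow>
    \<bar>2 * payoff U (v t) (x t) - 2 * \<eta> * kinetic_energy \<theta> (x t) (v t)\<bar> \<le> L"
proof -
  obtain Kmax where "0 \<le> Kmax" and Kmax: "\<And>t. 0 \<le> t \<Longrightarrow> kinetic_energy \<theta> (x t) (v t) \<le> Kmax"
    using kinetic_energy_bounded by blast
  obtain V where V: "\<And>t. 0 \<le> t \<Longrightarrow> norm (v t) \<le> V"
    using norm_v_bounded by blast
  obtain Cv where "0 \<le> Cv" and Cv: "\<And>y. y \<in> strat_simplex \<Longrightarrow> norm (U *v y) \<le> Cv"
    by (rule continuous_on_compact_bound[OF compact_strat_simplex linear_continuous_on]) auto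
  show ?thesis
  proof (rule that[of "2 * (V * Cv) + 2 * \<eta> * Kmax"])
    fix t :: real assume "0 \<le> t"
    have "\<bar>payoff U (v t) (x t)\<bar> \<le> norm (v t) * norm (U *v x t)"
      unfolding payoff_def by (rule Cauchy_Schwarz_ineq2)
    also have "\<dots> \<le> V * Cv"
      using V[OF \<open>0 \<le> t\<close>] Cv[OF in_strat_simplex[OF \<open>0 \<le> t\<close>]]
      by (intro mult_mono) (auto intro: order.trans[OF norm_ge_zero])
    moreover have "0 \<le> \<eta> * kinetic_energy \<theta> (x t) (v t)" "\<eta> * kinetic_energy \<theta> (x t) (v t) \<le> \<eta> * Kmax"
      using Kmax[OF \<open>0 \<le> t\<close>] kinetic_energy_nonneg[OF \<open>0 \<le> t\<close>] damping
      by (auto intro: mult_left_mono)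
    ultimately show "\<bar>2 * payoff U (v t) (x t) - 2 * \<eta> * kinetic_energy \<theta> (x t) (v t)\<bar>
        \<le> 2 * (V * Cv) + 2 * \<eta> * Kmax"
      by (simp add: abs_le_iff)
  qed
qed

lemma kinetic_energy_tendsto_0: "((\<lambda>t. kinetic_energy \<theta> (x t) (v t)) \<longlongrightarrow> 0) at_top"
proof -
  obtain L where L: "\<And>t. 0 \<le> t \<Longrightarrow>
      \<bar>2 * payoff U (v t) (x t) - 2 * \<eta> * kinetic_energy \<theta> (x t) (v t)\<bar> \<le> L"
    using kinetic_energy_derivative_bounded by blast
  obtain C where C: "\<And>y. y \<in> strat_simplex \<Longrightarrow> \<bar>payoff U y y\<bar> \<le> C"
    using strat_simplex_payoff_bounded by blast
  show ?thesis
  proof (rule tendsto_0_if_dissipated[OF has_derivative_kinetic_energy L kinetic_energy_nonneg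
        has_derivative_energy, where c = "2 * \<eta>" and B = "- C"])
    show "- C \<le> energy t" if "0 \<le> t" for t
      using C[OF in_strat_simplex[OF that]] kinetic_energy_nonneg[OF that]
      unfolding energy_def by linarith
  qed (use damping in auto)
qed

lemma eventually_norm_v_less:
  assumes "\<nu> > 0" shows "\<forall>\<^sub>F t in at_top. norm (v t) < \<nu>"
proof -
  define m where "m = (deriv ^^ 2) \<theta> 1"
  have "m > 0" unfolding m_def by (simp add: kernel_d2_pos[OF kernel])
  then have "\<forall>\<^sub>F t in at_top. kinetic_energy \<theta> (x t) (v t) < m * \<nu>\<^sup>2"
    using kinetic_energy_tendsto_0 assms by (intro order_tendstoD) auto
  moreover have "\<forall>\<^sub>F t in at_top. 0 \<le> (t::real)" by (rule eventually_ge_at_top)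
  ultimately show ?thesis
  proof eventually_elim
    case (elim t)
    then have "m * (norm (v t))\<^sup>2 < m * \<nu>\<^sup>2"
      using kinetic_energy_ge_norm[of t] unfolding m_def by linarith
    then show ?case using \<open>m > 0\<close> assms by (simp add: power_less_imp_less_base)
  qed
qed

lemma norm_x_diff_le:
  assumes "0 \<le> s" "s \<le> t" "\<And>r. s \<le> r \<Longrightarrow> r \<le> t \<Longrightarrow> norm (v r) \<le> \<nu>"
  shows "norm (x t - x s) \<le> \<nu> * (t - s)"
proof -
  have "norm (x t - x s) \<le> \<nu> * norm (t - s)"
  proof (rule differentiable_bound[OF convex_closed_interval(1)])
    fix r assume "r \<in> {s..t}"
    then show "(x has_derivative (\<lambda>h. h *\<^sub>R v r)) (at r within {s..t})"
      using has_vector_derivative_x[of r] assms(1)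
      by (auto simp: has_vector_derivative_def intro: has_derivative_subset)
    show "onorm (\<lambda>h. h *\<^sub>R v r) \<le> \<nu>"
      using assms(3) \<open>r \<in> {s..t}\<close> by (simp add: onorm_scaleR_left[OF bounded_linear_ident] onorm_id)
  qed (use assms in auto)
  then show ?thesis using assms by simp
qed

text \<open>Near an \<open>\<omega>\<close>-limit point the velocity is eventually small, so the momentum gap between two
  strategies in the support grows at a rate close to their payoff difference; being bounded,
  that difference must vanish.\<close>
lemma omega_limit_point_vfield_le:
  assumes "omega_limit_point x l" "0 < l $ a" "0 < l $ b"
  shows "vfield U l a \<le> vfield U l b"
proof (rule ccontr)
  assume "\<not> vfield U l a \<le> vfield U l b"
  define A where "A = (vfield U l a - vfield U l b) / 2"
  have "A > 0" and A: "A < vfield U l a - vfield U l b"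
    using \<open>\<not> vfield U l a \<le> vfield U l b\<close> by (simp_all add: A_def)
  obtain \<beta>1 \<beta>2 where "\<beta>1 > 0" "\<beta>2 > 0" and near: "\<And>y w. dist y l < \<beta>1 \<Longrightarrow> norm w < \<beta>2 \<Longrightarrow>
      A < momentum_gap_rate \<theta> U \<eta> a b y w \<and> \<bar>momentum_gap \<theta> a b y w\<bar> < 1"
    by (rule momentum_gap_near_rest[OF kernel assms(2,3) A]) blast
  define h where "h = 3 / A"
  define \<nu> where "\<nu> = min \<beta>2 (\<beta>1 / (2 * h))"
  have "h > 0" "\<nu> > 0" using \<open>A > 0\<close> \<open>\<beta>1 > 0\<close> \<open>\<beta>2 > 0\<close> by (simp_all add: h_def \<nu>_def)
  obtain T where T: "\<And>t. T \<le> t \<Longrightarrow> norm (v t) < \<nu>"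
    using eventually_norm_v_less[OF \<open>\<nu> > 0\<close>] unfolding eventually_at_top_linorder by blast
  obtain t0 where t0: "max T 0 \<le> t0" "dist (x t0) l < \<beta>1 / 2"
    using assms(1) \<open>\<beta>1 > 0\<close> unfolding omega_limit_point_def by (meson half_gt_zero)
  have near_t: "A < momentum_gap_rate \<theta> U \<eta> a b (x t) (v t) \<and> \<bar>momentum_gap \<theta> a b (x t) (v t)\<bar> < 1"
    if "t0 \<le> t" "t \<le> t0 + h" for t
  proof (rule near)
    have "norm (x t - x t0) \<le> \<nu> * (t - t0)"
      using t0 that T by (intro norm_x_diff_le) (auto intro: less_imp_le)
    also have "\<dots> \<le> \<nu> * h" using that \<open>\<nu> > 0\<close> by (intro mult_left_mono) auto
    also have "\<dots> \<le> \<beta>1 / (2 * h) * h"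
      using \<open>h > 0\<close> by (intro mult_right_mono) (auto simp: \<nu>_def)
    also have "\<dots> = \<beta>1 / 2" using \<open>h > 0\<close> by simp
    finally show "dist (x t) l < \<beta>1"
      using t0(2) dist_triangle[of "x t" l "x t0"] by (simp add: dist_norm)
    show "norm (v t) < \<beta>2" using T[of t] t0 that by (simp add: \<nu>_def)
  qed
  have "A * (t0 + h - t0) \<le> momentum_gap \<theta> a b (x (t0 + h)) (v (t0 + h)) - momentum_gap \<theta> a b (x t0) (v t0)"
  proof (rule has_real_derivative_increment_ge[of _ _ "{0..}" _ "\<lambda>t. momentum_gap_rate \<theta> U \<eta> a b (x t) (v t)"])
    fix t assume "t0 \<le> t" "t \<le> t0 + h"
    then show "((\<lambda>s. momentum_gap \<theta> a b (x s) (v s)) has_real_derivative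
        momentum_gap_rate \<theta> U \<eta> a b (x t) (v t)) (at t within {0..})"
      using has_derivative_momentum_gap t0 by simp
    show "A \<le> momentum_gap_rate \<theta> U \<eta> a b (x t) (v t)"
      using near_t \<open>t0 \<le> t\<close> \<open>t \<le> t0 + h\<close> by (simp add: less_imp_le)
  qed (use t0 \<open>h > 0\<close> in auto)
  moreover have "A * (t0 + h - t0) = 3" using \<open>A > 0\<close> by (simp add: h_def)
  ultimately show False using near_t[of t0] near_t[of "t0 + h"] \<open>h > 0\<close> by auto
qed

lemma tendsto_if_confined_near_superior:
  assumes xs: "xs \<in> strat_simplex"
    and superior: "\<And>y. y \<in> strat_simplex \<Longrightarrow> 0 < dist y xs \<Longrightarrow> dist y xs \<le> r \<Longrightarrow> payoff U y y < payoff U xs y"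
    and support: "\<And>a. 0 < xs $ a \<Longrightarrow> r < xs $ a"
    and confined: "\<And>t. 0 \<le> t \<Longrightarrow> dist (x t) xs \<le> r"
  shows "(x \<longlongrightarrow> xs) at_top"
proof (rule ccontr)
  assume "\<not> (x \<longlongrightarrow> xs) at_top"
  moreover have "compact (strat_simplex \<inter> cball xs r)"
    by (intro compact_Int_closed compact_strat_simplex closed_cball)
  moreover have "x t \<in> strat_simplex \<inter> cball xs r" if "0 \<le> t" for t
    using in_strat_simplex[OF that] confined[OF that] by (simp add: dist_commute)
  ultimately obtain l where "l \<in> strat_simplex \<inter> cball xs r" "l \<noteq> xs" "omega_limit_point x l"
    using omega_limit_point_in_compact by blast
  then have l: "l \<in> strat_simplex" "dist l xs \<le> r" "l \<noteq> xs" "omega_limit_point x l"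
    by (auto simp: dist_commute)
  have "0 < l $ a" if "0 < xs $ a" for a
  proof -
    have "\<bar>l $ a - xs $ a\<bar> \<le> r"
      using component_le_norm_cart[of "l - xs" a] l(2) by (simp add: dist_norm)
    then show ?thesis using support[OF that] by linarith
  qed
  then have "payoff U xs l = payoff U l l"
    using omega_limit_point_vfield_le[OF l(4)] by (intro payoff_eq_at_rest_point l(1) xs)
  then show False using superior[OF l(1)] l(2,3) by simp
qed

lemma tendsto_if_energy_below:
  assumes "xs \<in> strat_simplex"
    and sphere: "\<And>y. y \<in> strat_simplex \<Longrightarrow> dist y xs = r \<Longrightarrow> payoff U y y \<le> c"
    and superior: "\<And>y. y \<in> strat_simplex \<Longrightarrow> 0 < dist y xs \<Longrightarrow> dist y xs \<le> r \<Longrightarrow> payoff U y y < payoff U xs y"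
    and support: "\<And>a. 0 < xs $ a \<Longrightarrow> r < xs $ a"
    and "dist (x 0) xs < r" "energy 0 < - c"
  shows "(x \<longlongrightarrow> xs) at_top"
proof (rule tendsto_if_confined_near_superior[OF assms(1) superior support])
  show "dist (x t) xs \<le> r" if "0 \<le> t" for t
    using dist_less_if_energy_below[OF sphere assms(5,6) that] by simp
qed

end

theorem proposition4p7:
  fixes \<theta> :: "real \<Rightarrow> real" and U :: "real ^ 'n::finite ^ 'n"
    and \<eta> :: real and xs :: "real ^ 'n"
  assumes "kernel \<theta>"
    and "transpose U = U"
    and "\<eta> > 0"
    and "\<forall>x0\<in>strat_simplex_int. \<forall>v0 :: real ^ 'n. (\<Sum>a\<in>UNIV. v0 $ a) = 0 \<longrightarrow>
           (\<exists>x v. ID_solution \<theta> U \<eta> x v \<and> x 0 = x0 \<and> v 0 = v0)"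
    and "ESS U xs"
  shows "\<exists>\<delta>>0. \<exists>\<epsilon>>0. \<forall>x v. ID_solution \<theta> U \<eta> x v \<and> dist (x 0) xs < \<delta>
           \<and> speed \<theta> (x 0) (v 0) < \<epsilon> \<longrightarrow> (x \<longlongrightarrow> xs) at_top"
proof -
  obtain r \<gamma> where "r > 0" "\<gamma> > 0"
    and sphere: "\<And>y. y \<in> strat_simplex \<Longrightarrow> dist y xs = r \<Longrightarrow> payoff U y y \<le> payoff U xs xs - \<gamma>"
    and superior: "\<And>y. y \<in> strat_simplex \<Longrightarrow> 0 < dist y xs \<Longrightarrow> dist y xs \<le> r \<Longrightarrow> payoff U y y < payoff U xs y"
    and support: "\<And>a. 0 < xs $ a \<Longrightarrow> r < xs $ a"
    using symmetric_ESS_basin[OF assms(2,5)] by blast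
  have "continuous_on UNIV (\<lambda>y. payoff U y y)" by (intro continuous_intros)
  then obtain \<delta>0 where "\<delta>0 > 0" and \<delta>0: "\<And>y. dist y xs < \<delta>0 \<Longrightarrow> \<bar>payoff U y y - payoff U xs xs\<bar> < \<gamma> / 2"
    using \<open>\<gamma> > 0\<close> unfolding continuous_on_iff dist_real_def by (metis UNIV_I half_gt_zero)
  have "(x \<longlongrightarrow> xs) at_top"
    if H: "ID_solution \<theta> U \<eta> x v" "dist (x 0) xs < min \<delta>0 r" "speed \<theta> (x 0) (v 0) < sqrt (\<gamma> / 2)"
    for x v
  proof -
    interpret ID_trajectory \<theta> U \<eta> x v using H(1) assms(1-3) by unfold_locales
    have "kinetic_energy \<theta> (x 0) (v 0) < \<gamma> / 2"
      using H(3) by (simp add: speed_eq_sqrt_kinetic_energy)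
    moreover have "payoff U xs xs - \<gamma> / 2 < payoff U (x 0) (x 0)"
      using \<delta>0[of "x 0"] H(2) unfolding abs_less_iff by simp
    ultimately have "energy 0 < - (payoff U xs xs - \<gamma>)" by (simp add: energy_def)
    moreover have "xs \<in> strat_simplex" using assms(5) by (simp add: ESS_def)
    ultimately show ?thesis using H(2) by (intro tendsto_if_energy_below[OF _ sphere superior support]) auto
  qed
  moreover have "min \<delta>0 r > 0" "sqrt (\<gamma> / 2) > 0" using \<open>\<delta>0 > 0\<close> \<open>r > 0\<close> \<open>\<gamma> > 0\<close> by auto
  ultimately show ?thesis by blast
qed

end
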